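(* Let $a,c\in\mathbb{R}$, $b\in(\max\{a,0\},\infty)$, $h\in\mathbb{N}$, $v=(v_1,\dots,v_h)\in\mathbb{R}^h$, $f\in C^1(\mathbb{R},\mathbb{R})$, $p\in C(\mathbb{R},\mathbb{R})$ satisfy for all $x\in\mathbb{R}$ that $f'(x)>0=f(a)$ and $p^{-1}(\mathbb{R}\setminus\{0\})=(a,b)$, with $\mathcal{N}^\theta$, $\mathcal{L}$, $\mathcal{G}$ as in the context. Assume for all $x\in\mathbb{R}$ that $p(x)\ge0$, let $H=\{1,\dots,h\}$, assume $\min_{j\in H}v_j>0$, let $\theta=(\theta_1,\dots,\theta_h)\in\mathcal{G}^{-1}(\{0\})$, and assume that $\theta$ is not a descending critical point of $\mathcal{L}$. Then for all $j\in H$ with $a<\theta_j<b$ and $\mathcal{N}^\theta(\theta_j)<f(\theta_j)$ it holds that $\{i\in H\setminus\{j\}\colon\theta_i=\theta_j\}=\emptyset$.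
   Context: For $\theta=(\theta_1,\dots,\theta_h)\in\mathbb{R}^h$ let $\mathcal{N}^\theta(x)=c+\sum_{j=1}^hv_j\max\{x-\theta_j,0\}$ for $x\in\mathbb{R}$, let $\mathcal{L}(\theta)=\int_{\mathbb{R}}(\mathcal{N}^\theta(x)-f(x))^2p(x)\,\mathrm{d}x$, and let $\mathcal{G}\colon\mathbb{R}^h\to\mathbb{R}^h$ satisfy $\mathcal{G}(\theta)=-(\nabla\mathcal{L})(\theta)$ at every $\theta$ at which $\mathcal{L}$ is differentiable (in this setting $\mathcal{L}\in C^2(\mathbb{R}^h,\mathbb{R})$). For $n\in\mathbb{N}$ and $F\in C^2(\mathbb{R}^n,\mathbb{R})$, a point $x\in\mathbb{R}^n$ is a descending critical point of $F$ if $(\nabla F)(x)=0$ and there exists $u\in\mathbb{R}^n$ with $\langle u,((\operatorname{Hess}F)(x))u\rangle<0$. *)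

theory Defs
  imports "HOL-Analysis.Analysis"
begin

text \<open>Shallow ReLU network with one hidden layer; parameters indexed by the finite type 'n,
  so H = UNIV and h = CARD('n).\<close>
definition NN :: "real \<Rightarrow> real^'n \<Rightarrow> real^'n \<Rightarrow> real \<Rightarrow> real" where
  "NN c v \<theta> x = c + (\<Sum>j\<in>UNIV. v$j * max (x - \<theta>$j) 0)"

definition lossL :: "real \<Rightarrow> real^'n \<Rightarrow> (real \<Rightarrow> real) \<Rightarrow> (real \<Rightarrow> real) \<Rightarrow> real^'n \<Rightarrow> real" where
  "lossL c v f p \<theta> = integral UNIV (\<lambda>x. (NN c v \<theta> x - f x)^2 * p x)"

definition partial :: "'n \<Rightarrow> (real^'n \<Rightarrow> real) \<Rightarrow> real^'n \<Rightarrow> real" where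
  "partial i F x = deriv (\<lambda>t. F (x + t *\<^sub>R axis i 1)) 0"

definition grad :: "(real^'n \<Rightarrow> real) \<Rightarrow> real^'n \<Rightarrow> real^'n" where
  "grad F x = (\<chi> i. partial i F x)"

definition Hess :: "(real^'n \<Rightarrow> real) \<Rightarrow> real^'n \<Rightarrow> real^'n^'n" where
  "Hess F x = (\<chi> i j. partial i (partial j F) x)"

definition descending_critical_point :: "(real^'n \<Rightarrow> real) \<Rightarrow> real^'n \<Rightarrow> bool" where
  "descending_critical_point F x \<longleftrightarrow>
     grad F x = 0 \<and> (\<exists>u. u \<bullet> (Hess F x *v u) < 0)"

end

theory Submission
  imports Defs
begin

text \<open>
  The loss is differentiable everywhere, with
  \<open>\<partial>L/\<partial>\<theta>\<^sub>l = -2 v\<^sub>l \<integral>\<^sub>\<theta>\<^sub>l\<^sup>b (N\<^sup>\<theta> - f) p\<close>. Suppose two neurons \<open>i \<noteq> j\<close> share a kink \<open>s \<in> (a, b)\<close> and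
  put \<open>g = (N\<^sup>\<theta>(s) - f(s)) p(s)\<close>, \<open>P = \<integral>\<^sub>s\<^sup>b p\<close>. Differentiating once more gives the Hessian
  entries \<open>H\<^sub>i\<^sub>i = 2 v\<^sub>i g + 2 v\<^sub>i\<^sup>2 P\<close>, \<open>H\<^sub>j\<^sub>j = 2 v\<^sub>j g + 2 v\<^sub>j\<^sup>2 P\<close> and \<open>H\<^sub>i\<^sub>j = H\<^sub>j\<^sub>i = 2 v\<^sub>i v\<^sub>j P\<close>.
  Along \<open>u = e\<^sub>i / v\<^sub>i - e\<^sub>j / v\<^sub>j\<close> the \<open>P\<close>-terms cancel and \<open>u \<bullet> H u = 2 g (1/v\<^sub>i + 1/v\<^sub>j)\<close>,
  which is negative when \<open>N\<^sup>\<theta>(s) < f(s)\<close> because \<open>p(s) > 0\<close>; so \<open>\<theta>\<close> would be a descending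
  critical point. All derivatives come from remainders of order \<open>t\<^sup>2\<close>: moving a kink by \<open>t\<close>
  changes the linearised ReLU only on a window of width \<open>2|t|\<close>, by at most \<open>|t|\<close>.
\<close>

lemma
  fixes g :: "real \<Rightarrow> real"
  assumes "continuous_on {a..b} g"
  shows integrable_ge_indicator: "(\<lambda>x. of_bool (s \<le> x) * g x) integrable_on {a..b}"
    and integral_ge_indicator:
      "integral {a..b} (\<lambda>x. of_bool (s \<le> x) * g x) = integral {max a s..b} g"
proof -
  have restrict: "(\<lambda>x. of_bool (s \<le> x) * g x) = (\<lambda>x. if x \<in> {s..} then g x else 0)"
    by auto
  have Int: "{s..} \<inter> {a..b} = {max a s..b}"
    by auto
  have "g integrable_on {max a s..b}"
    by (rule integrable_continuous_real, rule continuous_on_subset[OF assms]) auto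
  then show "(\<lambda>x. of_bool (s \<le> x) * g x) integrable_on {a..b}"
    unfolding restrict integrable_restrict_Int Int .
  show "integral {a..b} (\<lambda>x. of_bool (s \<le> x) * g x) = integral {max a s..b} g"
    unfolding restrict integral_restrict_Int Int ..
qed

lemma abs_integral_le_window:
  fixes q \<phi> :: "real \<Rightarrow> real"
  assumes q\<phi>: "(\<lambda>x. q x * \<phi> x) integrable_on {a..b}"
    and M: "M \<ge> 0" "\<And>x. x \<in> {a..b} \<Longrightarrow> \<bar>q x\<bar> \<le> M"
    and \<phi>: "\<And>x. \<bar>\<phi> x\<bar> \<le> \<bar>t\<bar> * indicator {s - \<bar>t\<bar>..s + \<bar>t\<bar>} x"
  shows "\<bar>integral {a..b} (\<lambda>x. q x * \<phi> x)\<bar> \<le> 2 * M * t\<^sup>2"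
proof -
  define W where "W = {s - \<bar>t\<bar>..s + \<bar>t\<bar>}"
  define w where "w x = (if x \<in> W then M * \<bar>t\<bar> else 0)" for x
  have Int: "W \<inter> {a..b} = {max a (s - \<bar>t\<bar>)..min b (s + \<bar>t\<bar>)}"
    by (auto simp: W_def)
  have w: "w integrable_on {a..b}"
    unfolding w_def[abs_def] integrable_restrict_Int Int
    by (intro integrable_continuous_real continuous_on_const)
  have "\<bar>integral {a..b} (\<lambda>x. q x * \<phi> x)\<bar> \<le> integral {a..b} w"
  proof (rule integral_norm_bound_integral[OF q\<phi> w, unfolded real_norm_def])
    fix x assume "x \<in> {a..b}"
    then have "\<bar>q x\<bar> * \<bar>\<phi> x\<bar> \<le> M * (\<bar>t\<bar> * indicator W x)"
      using M \<phi>[of x] unfolding W_def by (intro mult_mono) auto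
    then show "\<bar>q x * \<phi> x\<bar> \<le> w x"
      by (cases "x \<in> W") (simp_all add: w_def abs_mult)
  qed
  also have "integral {a..b} w = M * \<bar>t\<bar> * measure lborel {max a (s - \<bar>t\<bar>)..min b (s + \<bar>t\<bar>)}"
    unfolding w_def[abs_def] integral_restrict_Int Int by simp
  also have "\<dots> \<le> M * \<bar>t\<bar> * (2 * \<bar>t\<bar>)"
    using M(1) by (intro mult_left_mono) (auto simp: content_real)
  finally show ?thesis
    by (simp add: power2_eq_square)
qed

lemma has_derivative_at_quadratic_remainder:
  fixes F :: "'a::real_normed_vector \<Rightarrow> 'b::real_normed_vector"
  assumes "bounded_linear F'" "0 < \<delta>"
    and "\<And>y. norm (y - x) < \<delta> \<Longrightarrow> norm (F y - F x - F' (y - x)) \<le> C * (norm (y - x))\<^sup>2"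
  shows "(F has_derivative F') (at x)"
  unfolding has_derivative_at_alt
proof (intro conjI allI impI assms(1))
  fix e :: real assume e: "e > 0"
  define d where "d = min \<delta> (e / (\<bar>C\<bar> + 1))"
  have d: "d > 0"
    using e assms(2) by (simp add: d_def)
  show "\<exists>d>0. \<forall>y. norm (y - x) < d \<longrightarrow> norm (F y - F x - F' (y - x)) \<le> e * norm (y - x)"
  proof (intro exI[of _ d] conjI allI impI d)
    fix y assume y: "norm (y - x) < d"
    let ?n = "norm (y - x)"
    have "(\<bar>C\<bar> + 1) * ?n \<le> e"
      using y e by (simp add: d_def field_simps)
    then have "(\<bar>C\<bar> + 1) * ?n * ?n \<le> e * ?n"
      by (simp add: mult_right_mono)
    moreover have "norm (F y - F x - F' (y - x)) \<le> C * ?n\<^sup>2"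
      using y assms(3) by (simp add: d_def)
    moreover have "C * ?n\<^sup>2 \<le> (\<bar>C\<bar> + 1) * ?n * ?n"
      unfolding power2_eq_square mult.assoc by (rule mult_right_mono) auto
    ultimately show "norm (F y - F x - F' (y - x)) \<le> e * ?n"
      by linarith
  qed
qed

lemma has_real_derivative_quadratic_remainder:
  fixes F :: "real \<Rightarrow> real"
  assumes "0 < \<delta>" "\<And>t. \<bar>t\<bar> < \<delta> \<Longrightarrow> \<bar>F t - F 0 - t * D\<bar> \<le> C * t\<^sup>2"
  shows "(F has_real_derivative D) (at 0)"
  unfolding has_field_derivative_def
  by (rule has_derivative_at_quadratic_remainder[where \<delta>=\<delta> and C=C])
     (use assms in \<open>auto simp: bounded_linear_mult_right mult.commute\<close>)

lemma integral_tail_has_real_derivative: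
  fixes g :: "real \<Rightarrow> real"
  assumes "continuous_on UNIV g" "u < b"
  shows "((\<lambda>w. integral {w..b} g) has_real_derivative - g u) (at u)"
proof -
  have "((\<lambda>w. integral {w..b} g) has_real_derivative - g u) (at u within {u - 1..b})"
    by (rule integral_has_real_derivative') (use assms in \<open>auto intro: continuous_on_subset\<close>)
  moreover have "at u within {u - 1..b} = at u"
    by (rule at_within_interior) (use assms in simp)
  ultimately show ?thesis
    by simp
qed

lemma integral_tail_moment_has_real_derivative:
  fixes g h :: "real \<Rightarrow> real"
  assumes g: "continuous_on UNIV g" and h: "continuous_on UNIV h" and "u < b"
  shows "((\<lambda>w. integral {w..b} (\<lambda>x. g x + (x - w) * h x)) has_real_derivative
           - g u - integral {u..b} h) (at u)"
proof -
  have integrable: "k integrable_on {w..b}" if "continuous_on UNIV k" for k :: "real \<Rightarrow> real" and w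
    by (rule integrable_continuous_real, rule continuous_on_subset[OF that]) auto
  have split: "integral {w..b} (\<lambda>x. g x + (x - w) * h x)
      = integral {w..b} (\<lambda>x. g x + x * h x) - w * integral {w..b} h" for w
  proof -
    have "(\<lambda>x. g x + (x - w) * h x) = (\<lambda>x. (g x + x * h x) - w * h x)"
      by (auto simp: algebra_simps)
    then show ?thesis
      by (simp add: integral_diff integrable g h continuous_intros)
  qed
  have "((\<lambda>w. integral {w..b} (\<lambda>x. g x + x * h x) - w * integral {w..b} h) has_real_derivative
      - (g u + u * h u) - (1 * integral {u..b} h + - h u * u)) (at u)"
    by (intro DERIV_diff DERIV_mult integral_tail_has_real_derivative DERIV_ident
        continuous_intros g h \<open>u < b\<close>)
  then show ?thesis
    unfolding split by (simp add: algebra_simps)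
qed

text \<open>The remainder of the linearisation of \<open>s \<mapsto> max (x - s) 0\<close>, whose derivative in \<open>s\<close>
  is \<open>- of_bool (s \<le> x)\<close> away from the kink.\<close>

definition relu_taylor_rem :: "real \<Rightarrow> real \<Rightarrow> real \<Rightarrow> real" where
  "relu_taylor_rem s t x = max (x - s - t) 0 - max (x - s) 0 + t * of_bool (s \<le> x)"

lemma abs_relu_taylor_rem_le:
  "\<bar>relu_taylor_rem s t x\<bar> \<le> \<bar>t\<bar> * indicator {s - \<bar>t\<bar>..s + \<bar>t\<bar>} x"
  unfolding relu_taylor_rem_def indicator_def by (auto simp: max_def abs_if)

lemma integrable_mult_relu_taylor_rem:
  fixes q :: "real \<Rightarrow> real"
  assumes "continuous_on {a..b} q"
  shows "(\<lambda>x. q x * relu_taylor_rem s t x) integrable_on {a..b}"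
proof -
  have "(\<lambda>x. q x * (max (x - s - t) 0 - max (x - s) 0) + t * (of_bool (s \<le> x) * q x))
      integrable_on {a..b}"
  proof (rule integrable_add)
    show "(\<lambda>x. q x * (max (x - s - t) 0 - max (x - s) 0)) integrable_on {a..b}"
      by (intro integrable_continuous_real continuous_intros assms)
    show "(\<lambda>x. t * (of_bool (s \<le> x) * q x)) integrable_on {a..b}"
      by (intro integrable_on_mult_right integrable_ge_indicator assms)
  qed
  then show ?thesis
    by (simp add: relu_taylor_rem_def algebra_simps)
qed

lemma integrable_ge_indicator_mult_relu_taylor_rem:
  fixes g :: "real \<Rightarrow> real"
  assumes "continuous_on {a..b} g"
  shows "(\<lambda>x. of_bool (s \<le> x) * g x * relu_taylor_rem s t x) integrable_on {a..b}"
proof -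
  have "(\<lambda>x. of_bool (s \<le> x) * (g x * (max (x - s - t) 0 - (x - s) + t))) integrable_on {a..b}"
    by (intro integrable_ge_indicator continuous_intros assms)
  then show ?thesis
    by (rule integrable_eq) (auto simp: relu_taylor_rem_def)
qed

lemma NN_add_diff:
  "NN c v (\<eta> + h) x - NN c v \<eta> x = (\<Sum>l\<in>UNIV. v$l * (max (x - \<eta>$l - h$l) 0 - max (x - \<eta>$l) 0))"
  unfolding NN_def by (simp add: sum_subtractf right_diff_distrib algebra_simps)

lemma NN_add_axis:
  "NN c v (\<eta> + t *\<^sub>R axis k 1) x = NN c v \<eta> x + v$k * (max (x - \<eta>$k - t) 0 - max (x - \<eta>$k) 0)"
proof -
  have "NN c v (\<eta> + t *\<^sub>R axis k 1) x - NN c v \<eta> x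
      = (\<Sum>l\<in>UNIV. if l = k then v$k * (max (x - \<eta>$k - t) 0 - max (x - \<eta>$k) 0) else 0)"
    unfolding NN_add_diff by (intro sum.cong) (auto simp: axis_def)
  then show ?thesis
    by simp
qed

lemma abs_NN_add_diff_le:
  "\<bar>NN c v (\<eta> + h) x - NN c v \<eta> x\<bar> \<le> (\<Sum>l\<in>UNIV. \<bar>v$l\<bar>) * norm h"
proof -
  have "\<bar>NN c v (\<eta> + h) x - NN c v \<eta> x\<bar>
      \<le> (\<Sum>l\<in>UNIV. \<bar>v$l * (max (x - \<eta>$l - h$l) 0 - max (x - \<eta>$l) 0)\<bar>)"
    unfolding NN_add_diff by (rule sum_abs)
  also have "\<dots> \<le> (\<Sum>l\<in>UNIV. \<bar>v$l\<bar> * norm h)"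
  proof (rule sum_mono)
    fix l
    have "\<bar>max (x - \<eta>$l - h$l) 0 - max (x - \<eta>$l) 0\<bar> \<le> \<bar>h$l\<bar>"
      by (simp add: max_def abs_if)
    also have "\<dots> \<le> norm h"
      by (rule component_le_norm_cart)
    finally have "\<bar>max (x - \<eta>$l - h$l) 0 - max (x - \<eta>$l) 0\<bar> \<le> norm h" .
    then show "\<bar>v$l * (max (x - \<eta>$l - h$l) 0 - max (x - \<eta>$l) 0)\<bar> \<le> \<bar>v$l\<bar> * norm h"
      by (simp add: abs_mult mult_left_mono)
  qed
  finally show ?thesis
    by (simp add: sum_distrib_right)
qed

lemma inner_matrix_vector_two_axes:
  fixes H :: "real^'n^'n"
  shows "(\<alpha> *\<^sub>R axis i 1 + \<beta> *\<^sub>R axis j 1) \<bullet> (H *v (\<alpha> *\<^sub>R axis i 1 + \<beta> *\<^sub>R axis j 1))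
    = \<alpha>\<^sup>2 * H$i$i + \<alpha> * \<beta> * (H$i$j + H$j$i) + \<beta>\<^sup>2 * H$j$j"
proof -
  have entry: "axis k 1 \<bullet> (H *v axis l 1) = H$k$l" for k l
    by (simp add: inner_axis' matrix_vector_mult_basis column_def)
  show ?thesis
    by (simp add: matrix_vector_right_distrib matrix_vector_mult_scaleR inner_add_left
        inner_add_right entry power2_eq_square algebra_simps)
qed

locale relu_loss =
  fixes a b c :: real and v :: "real^'n" and f p :: "real \<Rightarrow> real"
  assumes a_less_b: "a < b"
    and continuous_f: "continuous_on UNIV f"
    and continuous_p: "continuous_on UNIV p"
    and p_outside: "\<And>x. x \<notin> {a<..<b} \<Longrightarrow> p x = 0"
    and p_nonneg: "\<And>x. p x \<ge> 0"
begin

definition residual :: "real^'n \<Rightarrow> real \<Rightarrow> real" where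
  "residual \<eta> x = NN c v \<eta> x - f x"

definition loss_partial :: "'n \<Rightarrow> real^'n \<Rightarrow> real" where
  "loss_partial l \<eta> = -2 * v$l * integral {a..b} (\<lambda>x. of_bool (\<eta>$l \<le> x) * (residual \<eta> x * p x))"

definition tail_mass :: "real \<Rightarrow> real" where
  "tail_mass s = integral {s..b} p"

lemma continuous_on_residual [continuous_intros]: "continuous_on S (residual \<eta>)"
  unfolding residual_def[abs_def] NN_def
  by (intro continuous_intros continuous_on_subset[OF continuous_f]) auto

lemma continuous_on_p [continuous_intros]: "continuous_on S p"
  by (rule continuous_on_subset[OF continuous_p]) auto

lemma residual_add_axis:
  "residual (\<eta> + t *\<^sub>R axis k 1) x = residual \<eta> x + v$k * (max (x - \<eta>$k - t) 0 - max (x - \<eta>$k) 0)"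
  unfolding residual_def NN_add_axis by simp

lemma p_bounded:
  obtains M where "M \<ge> 0" "\<And>x. p x \<le> M"
proof -
  obtain M where M: "M \<ge> 0" "\<And>x. x \<in> {a..b} \<Longrightarrow> norm (p x) \<le> M"
    using continuous_on_compact_bound[OF compact_Icc continuous_on_p] by blast
  have "p x \<le> M" for x
    using M(1) M(2)[of x] p_outside[of x] by (cases "x \<in> {a..b}") (auto simp: abs_le_iff)
  with M(1) show ?thesis
    using that by blast
qed

lemma lossL_eq_integral: "lossL c v f p \<eta> = integral {a..b} (\<lambda>x. (residual \<eta> x)\<^sup>2 * p x)"
proof -
  have "(\<lambda>x. (NN c v \<eta> x - f x)\<^sup>2 * p x) = (\<lambda>x. if x \<in> {a..b} then (residual \<eta> x)\<^sup>2 * p x else 0)"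
    using p_outside by (force simp: residual_def)
  then show ?thesis
    unfolding lossL_def by (simp only: integral_restrict_UNIV)
qed

lemma lossL_remainder_eq:
  "lossL c v f p (\<eta> + h) - lossL c v f p \<eta> - (\<Sum>l\<in>UNIV. h$l * loss_partial l \<eta>)
   = (\<Sum>l\<in>UNIV. v$l * integral {a..b} (\<lambda>x. 2 * (residual \<eta> x * p x) * relu_taylor_rem (\<eta>$l) (h$l) x))
     + integral {a..b} (\<lambda>x. (residual (\<eta> + h) x - residual \<eta> x)\<^sup>2 * p x)"
proof -
  let ?R = "residual \<eta>" and ?R' = "residual (\<eta> + h)"
  let ?J = "\<lambda>l x. h$l * (2 * v$l * (of_bool (\<eta>$l \<le> x) * (?R x * p x)))"
  let ?E = "\<lambda>l x. v$l * (2 * (?R x * p x) * relu_taylor_rem (\<eta>$l) (h$l) x)"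
  have rem_sum: "(\<Sum>l\<in>UNIV. v$l * relu_taylor_rem (\<eta>$l) (h$l) x)
      = ?R' x - ?R x + (\<Sum>l\<in>UNIV. h$l * v$l * of_bool (\<eta>$l \<le> x))" for x
  proof -
    have "(\<Sum>l\<in>UNIV. v$l * relu_taylor_rem (\<eta>$l) (h$l) x)
        = (\<Sum>l\<in>UNIV. v$l * (max (x - \<eta>$l - h$l) 0 - max (x - \<eta>$l) 0))
          + (\<Sum>l\<in>UNIV. h$l * v$l * of_bool (\<eta>$l \<le> x))"
      unfolding relu_taylor_rem_def sum.distrib[symmetric] by (intro sum.cong) (auto simp: algebra_simps)
    then show ?thesis
      using NN_add_diff[of c v \<eta> h x] unfolding residual_def by linarith
  qed
  have pointwise: "(?R' x)\<^sup>2 * p x - (?R x)\<^sup>2 * p x + (\<Sum>l\<in>UNIV. ?J l x)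
      = (\<Sum>l\<in>UNIV. ?E l x) + (?R' x - ?R x)\<^sup>2 * p x" for x
  proof -
    have "(\<Sum>l\<in>UNIV. ?E l x) = 2 * (?R x * p x) * (\<Sum>l\<in>UNIV. v$l * relu_taylor_rem (\<eta>$l) (h$l) x)"
      by (simp add: sum_distrib_left algebra_simps)
    moreover have "(\<Sum>l\<in>UNIV. ?J l x) = 2 * (?R x * p x) * (\<Sum>l\<in>UNIV. h$l * v$l * of_bool (\<eta>$l \<le> x))"
      by (simp add: sum_distrib_left algebra_simps)
    ultimately show ?thesis
      unfolding rem_sum by (simp add: power2_eq_square algebra_simps)
  qed
  have int_sq: "(\<lambda>x. (residual \<eta>' x)\<^sup>2 * p x) integrable_on {a..b}" for \<eta>'
    by (intro integrable_continuous_real continuous_intros)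
  have int_J: "?J l integrable_on {a..b}" for l
    by (intro integrable_on_mult_right integrable_ge_indicator continuous_intros)
  have int_E: "?E l integrable_on {a..b}" for l
    by (intro integrable_on_mult_right integrable_mult_relu_taylor_rem continuous_intros)
  have "(\<Sum>l\<in>UNIV. h$l * loss_partial l \<eta>) = - integral {a..b} (\<lambda>x. \<Sum>l\<in>UNIV. ?J l x)"
    by (subst integral_sum) (simp_all add: int_J loss_partial_def sum_negf[symmetric])
  then have "lossL c v f p (\<eta> + h) - lossL c v f p \<eta> - (\<Sum>l\<in>UNIV. h$l * loss_partial l \<eta>)
      = integral {a..b} (\<lambda>x. (?R' x)\<^sup>2 * p x - (?R x)\<^sup>2 * p x + (\<Sum>l\<in>UNIV. ?J l x))"
    unfolding lossL_eq_integral
    by (simp add: integral_add integral_diff integrable_diff integrable_sum int_sq int_J)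
  also have "\<dots> = integral {a..b} (\<lambda>x. (\<Sum>l\<in>UNIV. ?E l x) + (?R' x - ?R x)\<^sup>2 * p x)"
    unfolding pointwise ..
  also have "\<dots> = (\<Sum>l\<in>UNIV. integral {a..b} (?E l)) + integral {a..b} (\<lambda>x. (?R' x - ?R x)\<^sup>2 * p x)"
    by (simp add: integral_add integral_sum integrable_sum int_E integrable_continuous_real continuous_intros)
  finally show ?thesis
    by simp
qed

lemma abs_sum_kink_remainders_le:
  assumes "M \<ge> 0" "\<And>x. x \<in> {a..b} \<Longrightarrow> \<bar>residual \<eta> x * p x\<bar> \<le> M"
  shows "\<bar>\<Sum>l\<in>UNIV. v$l * integral {a..b}
            (\<lambda>x. 2 * (residual \<eta> x * p x) * relu_taylor_rem (\<eta>$l) (h$l) x)\<bar>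
         \<le> 4 * M * (\<Sum>l\<in>UNIV. \<bar>v$l\<bar>) * (norm h)\<^sup>2"
proof -
  have window: "\<bar>integral {a..b} (\<lambda>x. 2 * (residual \<eta> x * p x) * relu_taylor_rem (\<eta>$l) (h$l) x)\<bar>
      \<le> 4 * M * (norm h)\<^sup>2" for l
  proof -
    have "\<bar>integral {a..b} (\<lambda>x. 2 * (residual \<eta> x * p x) * relu_taylor_rem (\<eta>$l) (h$l) x)\<bar>
        \<le> 2 * (2 * M) * (h$l)\<^sup>2"
      by (rule abs_integral_le_window[OF integrable_mult_relu_taylor_rem _ _ abs_relu_taylor_rem_le])
         (use assms in \<open>auto intro!: continuous_intros simp: abs_mult\<close>)
    also have "\<dots> \<le> 2 * (2 * M) * (norm h)\<^sup>2"
    proof -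
      have "(h$l)\<^sup>2 \<le> (norm h)\<^sup>2"
        by (metis abs_ge_zero component_le_norm_cart power2_abs power_mono)
      then show ?thesis
        using assms(1) by (simp add: mult_left_mono)
    qed
    finally show ?thesis
      by simp
  qed
  have "\<bar>v$l * integral {a..b} (\<lambda>x. 2 * (residual \<eta> x * p x) * relu_taylor_rem (\<eta>$l) (h$l) x)\<bar>
      \<le> \<bar>v$l\<bar> * (4 * M * (norm h)\<^sup>2)" for l
    unfolding abs_mult by (intro mult_left_mono window) simp
  then have "\<bar>\<Sum>l\<in>UNIV. v$l * integral {a..b}
        (\<lambda>x. 2 * (residual \<eta> x * p x) * relu_taylor_rem (\<eta>$l) (h$l) x)\<bar>
      \<le> (\<Sum>l\<in>UNIV. \<bar>v$l\<bar> * (4 * M * (norm h)\<^sup>2))"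
    by (intro order_trans[OF sum_abs] sum_mono)
  also have "\<dots> = 4 * M * (\<Sum>l\<in>UNIV. \<bar>v$l\<bar>) * (norm h)\<^sup>2"
    unfolding sum_distrib_right[symmetric] by (simp add: mult_ac)
  finally show ?thesis .
qed

lemma abs_integral_residual_shift_le:
  assumes "\<And>x. p x \<le> Mp"
  shows "\<bar>integral {a..b} (\<lambda>x. (residual (\<eta> + h) x - residual \<eta> x)\<^sup>2 * p x)\<bar>
         \<le> (\<Sum>l\<in>UNIV. \<bar>v$l\<bar>)\<^sup>2 * Mp * (b - a) * (norm h)\<^sup>2"
proof -
  let ?V = "\<Sum>l\<in>UNIV. \<bar>v$l\<bar>"
  have pointwise: "\<bar>(residual (\<eta> + h) x - residual \<eta> x)\<^sup>2 * p x\<bar> \<le> (?V * norm h)\<^sup>2 * Mp" for x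
  proof -
    have "\<bar>residual (\<eta> + h) x - residual \<eta> x\<bar> \<le> ?V * norm h"
      using abs_NN_add_diff_le[of c v \<eta> h x] by (simp add: residual_def)
    then have "(residual (\<eta> + h) x - residual \<eta> x)\<^sup>2 \<le> (?V * norm h)\<^sup>2"
      by (metis abs_ge_zero power2_abs power_mono)
    then show ?thesis
      using assms p_nonneg[of x] by (simp add: abs_mult mult_mono)
  qed
  have "norm (integral {a..b} (\<lambda>x. (residual (\<eta> + h) x - residual \<eta> x)\<^sup>2 * p x))
      \<le> (?V * norm h)\<^sup>2 * Mp * (b - a)"
    by (rule integral_bound) (use a_less_b pointwise in \<open>auto intro!: continuous_intros\<close>)
  then show ?thesis
    by (simp add: power_mult_distrib algebra_simps)
qed

lemma lossL_has_derivative: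
  "(lossL c v f p has_derivative (\<lambda>h. \<Sum>l\<in>UNIV. h$l * loss_partial l \<eta>)) (at \<eta>)"
proof -
  have "continuous_on {a..b} (\<lambda>x. residual \<eta> x * p x)"
    by (intro continuous_intros)
  from continuous_on_compact_bound[OF compact_Icc this, unfolded real_norm_def]
  obtain M where M: "M \<ge> 0" "\<And>x. x \<in> {a..b} \<Longrightarrow> \<bar>residual \<eta> x * p x\<bar> \<le> M"
    by blast
  obtain Mp where Mp: "\<And>x. p x \<le> Mp"
    using p_bounded by blast
  let ?V = "\<Sum>l\<in>UNIV. \<bar>v$l\<bar>"
  show ?thesis
  proof (rule has_derivative_at_quadratic_remainder[OF _ zero_less_one,
        where C = "4 * M * ?V + ?V\<^sup>2 * Mp * (b - a)"])
    show "bounded_linear (\<lambda>h. \<Sum>l\<in>UNIV. h$l * loss_partial l \<eta>)"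
      by (intro bounded_linear_sum bounded_linear_mult_left[THEN bounded_linear_compose]
          bounded_linear_vec_nth)
    fix y
    show "norm (lossL c v f p y - lossL c v f p \<eta> - (\<Sum>l\<in>UNIV. (y - \<eta>)$l * loss_partial l \<eta>))
        \<le> (4 * M * ?V + ?V\<^sup>2 * Mp * (b - a)) * (norm (y - \<eta>))\<^sup>2"
      using lossL_remainder_eq[of \<eta> "y - \<eta>"] abs_triangle_ineq
        abs_sum_kink_remainders_le[OF M, of "y - \<eta>"] abs_integral_residual_shift_le[OF Mp, of \<eta> "y - \<eta>"]
      by (simp add: distrib_right)
  qed
qed

lemma partial_lossL: "partial l (lossL c v f p) = loss_partial l"
proof
  fix \<eta> :: "real^'n"
  have "((\<lambda>t. \<eta> + t *\<^sub>R axis l 1) has_derivative (\<lambda>t. t *\<^sub>R axis l 1)) (at 0)"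
    by (auto intro!: derivative_eq_intros)
  from has_derivative_compose[OF this lossL_has_derivative[of "\<eta> + 0 *\<^sub>R axis l (1::real)"]]
  have "((\<lambda>t. lossL c v f p (\<eta> + t *\<^sub>R axis l 1)) has_derivative
      (\<lambda>t. \<Sum>m\<in>UNIV. (t *\<^sub>R axis l 1)$m * loss_partial m \<eta>)) (at 0)"
    by simp
  moreover have "(\<Sum>m\<in>UNIV. (t *\<^sub>R axis l 1)$m * loss_partial m \<eta>) = t * loss_partial l \<eta>" for t
    by (simp add: axis_def if_distrib if_distribR cong: if_cong)
  ultimately have "((\<lambda>t. lossL c v f p (\<eta> + t *\<^sub>R axis l 1)) has_real_derivative loss_partial l \<eta>) (at 0)"
    by (simp add: has_field_derivative_def mult_commute_abs)
  then show "partial l (lossL c v f p) \<eta> = loss_partial l \<eta>"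
    unfolding partial_def by (rule DERIV_imp_deriv)
qed

lemma Hess_lossL:
  "Hess (lossL c v f p) \<theta> $ k $ l = deriv (\<lambda>t. loss_partial l (\<theta> + t *\<^sub>R axis k 1)) 0"
  by (simp add: Hess_def partial_lossL partial_def)

lemma loss_partial_other_axis_remainder_eq:
  assumes "k \<noteq> l" "\<theta>$k = s" "\<theta>$l = s" "a \<le> s"
  shows "loss_partial l (\<theta> + t *\<^sub>R axis k 1) - loss_partial l \<theta> - t * (2 * v$l * v$k * tail_mass s)
         = -2 * v$l * v$k * integral {a..b} (\<lambda>x. of_bool (s \<le> x) * p x * relu_taylor_rem s t x)"
proof -
  let ?q = "\<lambda>x. of_bool (s \<le> x) * p x"
  have l_entry: "(\<theta> + t *\<^sub>R axis k 1)$l = s"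
    using assms by (simp add: axis_def)
  have int_q: "?q integrable_on {a..b}"
    by (intro integrable_ge_indicator continuous_intros)
  have int_R: "(\<lambda>x. of_bool (s \<le> x) * (residual \<theta> x * p x)) integrable_on {a..b}"
    by (intro integrable_ge_indicator continuous_intros)
  have int_rem: "(\<lambda>x. ?q x * relu_taylor_rem s t x) integrable_on {a..b}"
    by (intro integrable_ge_indicator_mult_relu_taylor_rem continuous_intros)
  have pointwise: "of_bool (s \<le> x) * (residual (\<theta> + t *\<^sub>R axis k 1) x * p x)
      = of_bool (s \<le> x) * (residual \<theta> x * p x) + v$k * (?q x * relu_taylor_rem s t x) - t * v$k * ?q x" for x
    unfolding residual_add_axis relu_taylor_rem_def assms(2) by (simp add: algebra_simps)
  have "integral {a..b} ?q = tail_mass s"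
    using assms(4) by (simp add: integral_ge_indicator continuous_intros tail_mass_def)
  moreover have "((\<lambda>x. of_bool (s \<le> x) * (residual (\<theta> + t *\<^sub>R axis k 1) x * p x)) has_integral
      integral {a..b} (\<lambda>x. of_bool (s \<le> x) * (residual \<theta> x * p x))
      + v$k * integral {a..b} (\<lambda>x. ?q x * relu_taylor_rem s t x) - t * v$k * integral {a..b} ?q) {a..b}"
    unfolding pointwise
    by (intro has_integral_diff has_integral_add has_integral_mult_right integrable_integral
        int_R int_rem int_q)
  ultimately show ?thesis
    unfolding loss_partial_def l_entry using assms(3)
    by (simp add: integral_unique algebra_simps)
qed

lemma loss_partial_has_derivative_other_axis:
  assumes "k \<noteq> l" "\<theta>$k = s" "\<theta>$l = s" "a \<le> s"
  shows "((\<lambda>t. loss_partial l (\<theta> + t *\<^sub>R axis k 1)) has_real_derivative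
           2 * v$l * v$k * tail_mass s) (at 0)"
proof -
  obtain Mp where Mp: "Mp \<ge> 0" "\<And>x. p x \<le> Mp"
    using p_bounded by blast
  show ?thesis
  proof (rule has_real_derivative_quadratic_remainder[OF zero_less_one,
        where C = "4 * \<bar>v$l * v$k\<bar> * Mp"])
    fix t :: real
    have "\<bar>loss_partial l (\<theta> + t *\<^sub>R axis k 1) - loss_partial l \<theta> - t * (2 * v$l * v$k * tail_mass s)\<bar>
        = 2 * \<bar>v$l * v$k\<bar> * \<bar>integral {a..b} (\<lambda>x. of_bool (s \<le> x) * p x * relu_taylor_rem s t x)\<bar>"
      unfolding loss_partial_other_axis_remainder_eq[OF assms] by (simp add: abs_mult)
    also have "\<dots> \<le> 2 * \<bar>v$l * v$k\<bar> * (2 * Mp * t\<^sup>2)"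
      by (intro mult_left_mono abs_integral_le_window[OF _ _ _ abs_relu_taylor_rem_le])
         (use Mp p_nonneg in \<open>auto intro!: integrable_ge_indicator_mult_relu_taylor_rem continuous_intros\<close>)
    finally show "\<bar>loss_partial l (\<theta> + t *\<^sub>R axis k 1) - loss_partial l (\<theta> + 0 *\<^sub>R axis k 1)
        - t * (2 * v$l * v$k * tail_mass s)\<bar> \<le> 4 * \<bar>v$l * v$k\<bar> * Mp * t\<^sup>2"
      by (simp add: mult_ac)
  qed
qed

lemma loss_partial_has_derivative_own_axis:
  assumes "\<theta>$k = s" "a < s" "s < b"
  shows "((\<lambda>t. loss_partial k (\<theta> + t *\<^sub>R axis k 1)) has_real_derivative
           2 * v$k * (residual \<theta> s * p s) + 2 * (v$k)\<^sup>2 * tail_mass s) (at 0)"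
proof -
  \<comment> \<open>the residual of the network without neuron \<open>k\<close>, which does not depend on \<open>\<theta>$k\<close>\<close>
  define \<rho> where "\<rho> x = residual \<theta> x - v$k * max (x - s) 0" for x
  define \<Phi> where "\<Phi> w = integral {w..b} (\<lambda>x. \<rho> x * p x + (x - w) * (v$k * p x))" for w
  have "(\<Phi> has_real_derivative - (\<rho> s * p s) - integral {s..b} (\<lambda>x. v$k * p x)) (at s)"
    unfolding \<Phi>_def \<rho>_def
    by (rule integral_tail_moment_has_real_derivative) (use assms in \<open>auto intro!: continuous_intros\<close>)
  then have "((\<lambda>t. -2 * v$k * \<Phi> (t + s)) has_real_derivative
      -2 * v$k * (- (\<rho> s * p s) - integral {s..b} (\<lambda>x. v$k * p x))) (at 0)"
    by (intro DERIV_cmult) (simp add: DERIV_shift[symmetric])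
  moreover have "-2 * v$k * (- (\<rho> s * p s) - integral {s..b} (\<lambda>x. v$k * p x))
      = 2 * v$k * (residual \<theta> s * p s) + 2 * (v$k)\<^sup>2 * tail_mass s"
    by (simp add: \<rho>_def tail_mass_def power2_eq_square algebra_simps)
  ultimately have "((\<lambda>t. -2 * v$k * \<Phi> (t + s)) has_real_derivative
      2 * v$k * (residual \<theta> s * p s) + 2 * (v$k)\<^sup>2 * tail_mass s) (at 0)"
    by simp
  then show ?thesis
  proof (rule has_field_derivative_transform_within_open[where S = "{a - s<..}"])
    fix t assume "t \<in> {a - s<..}"
    then have "max a (s + t) = t + s"
      by auto
    have k_entry: "(\<theta> + t *\<^sub>R axis k 1)$k = s + t"
      using assms(1) by (simp add: axis_def)
    have "(\<lambda>x. of_bool (s + t \<le> x) * (residual (\<theta> + t *\<^sub>R axis k 1) x * p x))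
        = (\<lambda>x. of_bool (s + t \<le> x) * (\<rho> x * p x + (x - (t + s)) * (v$k * p x)))"
      unfolding residual_add_axis \<rho>_def assms(1) by (auto simp: algebra_simps)
    then show "-2 * v$k * \<Phi> (t + s) = loss_partial k (\<theta> + t *\<^sub>R axis k 1)"
      unfolding loss_partial_def \<Phi>_def k_entry
      by (simp add: integral_ge_indicator continuous_intros \<open>max a (s + t) = t + s\<close> \<rho>_def)
  qed (use assms in auto)
qed

lemma Hess_lossL_indefinite_at_shared_kink:
  assumes "i \<noteq> j" "\<theta>$i = s" "\<theta>$j = s" "a < s" "s < b"
    and "v$i > 0" "v$j > 0" and "residual \<theta> s * p s < 0"
  shows "\<exists>u. u \<bullet> (Hess (lossL c v f p) \<theta> *v u) < 0"
proof -
  define H where "H = Hess (lossL c v f p) \<theta>"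
  define g where "g = residual \<theta> s * p s"
  have "H$i$i = 2 * v$i * g + 2 * (v$i)\<^sup>2 * tail_mass s" "H$j$j = 2 * v$j * g + 2 * (v$j)\<^sup>2 * tail_mass s"
    unfolding H_def Hess_lossL g_def
    by (intro DERIV_imp_deriv loss_partial_has_derivative_own_axis; use assms in simp)+
  moreover have "H$i$j = 2 * v$j * v$i * tail_mass s" "H$j$i = 2 * v$i * v$j * tail_mass s"
    unfolding H_def Hess_lossL
    by (intro DERIV_imp_deriv loss_partial_has_derivative_other_axis; use assms in simp)+
  \<comment> \<open>moving the two kinks apart leaves the network unchanged to first order\<close>
  ultimately have "(inverse (v$i) *\<^sub>R axis i 1 + (- inverse (v$j)) *\<^sub>R axis j 1)
      \<bullet> (H *v (inverse (v$i) *\<^sub>R axis i 1 + (- inverse (v$j)) *\<^sub>R axis j 1))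
      = 2 * g * (inverse (v$i) + inverse (v$j))"
    using assms(6,7) unfolding inner_matrix_vector_two_axes
    by (simp add: field_simps power2_eq_square)
  also have "\<dots> < 0"
  proof (rule mult_neg_pos)
    show "2 * g < 0"
      using assms(8) unfolding g_def by linarith
    show "inverse (v$i) + inverse (v$j) > 0"
      using assms(6,7) by (simp add: add_pos_pos)
  qed
  finally show ?thesis
    unfolding H_def by blast
qed

end

theorem lemma3p4:
  fixes a b c :: real and v :: "real^'n" and f f' p :: "real \<Rightarrow> real"
    and G :: "real^'n \<Rightarrow> real^'n" and \<theta> :: "real^'n"
  assumes b: "b > max a 0"
    and f_deriv: "\<And>x. (f has_real_derivative f' x) (at x)"
    and f'_cont: "continuous_on UNIV f'"
    and f'_pos: "\<And>x. f' x > 0"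
    and fa: "f a = 0"
    and p_cont: "continuous_on UNIV p"
    and p_supp: "{x. p x \<noteq> 0} = {a<..<b}"
    and p_nonneg: "\<And>x. p x \<ge> 0"
    and v_pos: "\<And>j. v$j > 0"
    and G: "\<And>\<eta>. lossL c v f p differentiable (at \<eta>) \<Longrightarrow> G \<eta> = - grad (lossL c v f p) \<eta>"
    and crit: "G \<theta> = 0"
    and not_desc: "\<not> descending_critical_point (lossL c v f p) \<theta>"
  shows "\<forall>j. a < \<theta>$j \<and> \<theta>$j < b \<and> NN c v \<theta> (\<theta>$j) < f (\<theta>$j)
           \<longrightarrow> {i \<in> UNIV - {j}. \<theta>$i = \<theta>$j} = {}"
proof (intro allI impI)
  fix j assume j: "a < \<theta>$j \<and> \<theta>$j < b \<and> NN c v \<theta> (\<theta>$j) < f (\<theta>$j)"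
  have "continuous_on UNIV f"
    using f_deriv by (intro continuous_at_imp_continuous_on) (auto intro: DERIV_continuous)
  then interpret relu_loss a b c v f p
    using b p_cont p_supp p_nonneg by unfold_locales auto
  have "lossL c v f p differentiable (at \<theta>)"
    using lossL_has_derivative unfolding differentiable_def by blast
  then have "grad (lossL c v f p) \<theta> = 0"
    using G crit by simp
  then have no_descent: "\<not> (\<exists>u. u \<bullet> (Hess (lossL c v f p) \<theta> *v u) < 0)"
    using not_desc unfolding descending_critical_point_def by blast
  have "residual \<theta> (\<theta>$j) * p (\<theta>$j) < 0"
  proof (rule mult_neg_pos)
    show "residual \<theta> (\<theta>$j) < 0"
      using j by (simp add: residual_def)
    show "p (\<theta>$j) > 0"
      using j p_supp p_nonneg[of "\<theta>$j"] by (metis greaterThanLessThan_iff less_eq_real_def mem_Collect_eq)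
  qed
  then show "{i \<in> UNIV - {j}. \<theta>$i = \<theta>$j} = {}"
    using Hess_lossL_indefinite_at_shared_kink[of _ j \<theta> "\<theta>$j"] no_descent j v_pos by blast
qed

end
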